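(* Let $R=\{r_{ab}\}_{N\times N}$ be the transition rate matrix of an irreducible continuous-time Markov jump process on states $\{1,\dots,N\}$: for $a\neq b$, $r_{ab}\ge 0$ is the rate of jumps from $b$ to $a$, and $r_{bb}=-\sum_{a\neq b} r_{ab}$. For a complex number $\omega$ with $\operatorname{Re}\omega>0$, let $\hat{P}(\omega)=\int_0^\infty e^{-\omega t}e^{Rt}\,\mathrm{d}t$ (the Laplace transform of the transition probability matrix). Fix distinct states $i\neq j$ and regard $R$ (hence $\hat P(\omega)$) as a function of the single off-diagonal rate $r_{ij}>0$, with all other off-diagonal rates fixed and $r_{jj}=-\sum_{a\neq j}r_{aj}$ adjusted accordingly. For $m=1,2$, let $a^{(m)}_l$ ($l=1,\dots,N$) and $b^{(m)}_{kl}$ ($k\neq l$, $(k,l)\neq(i,j)$) be coefficients not depending on $r_{ij}$ (defining observables that do not count transitions $j\to i$), and set $c^{(m)}_l=a^{(m)}_l+\sum_{k\neq l,\ (k,l)\neq(i,j)} b^{(m)}_{kl}\,r_{kl}$. Define $$\hat\chi_{ij}^{(1)(2)}(\omega)=\frac{\sum_l c^{(1)}_l\left[\hat P_{li}(\omega)-\hat P_{lj}(\omega)\right]}{\sum_l c^{(2)}_l\left[\hat P_{li}(\omega)-\hat P_{lj}(\omega)\right]}.$$ Then for $\operatorname{Re}\omega>0$, at every value of $r_{ij}$ where the denominator is nonzero, $\frac{\mathrm{d}\hat\chi_{ij}^{(1)(2)}(\omega)}{\mathrm{d}r_{ij}}=0$.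
   Context: $\hat\chi_{ij}^{(1)(2)}(\omega)$ is the ratio of the responses to $r_{ij}$ of the Laplace transforms $\hat Q_m(\omega)=\int_0^\infty e^{-\omega\tau}\langle Q_m(\tau)\rangle\,\mathrm{d}\tau$ of the observables $Q_m=\sum_l a^{(m)}_l\tau_l(\tau)+\sum_{k\neq l,(k,l)\neq(i,j)} b^{(m)}_{kl}n_{kl}(\tau)$, where $\tau_l(\tau)$ is the time spent in state $l$ up to time $\tau$ and $n_{kl}(\tau)$ the number of jumps $l\to k$ up to time $\tau$, for the process relaxing from an arbitrary fixed initial distribution under time-independent rates. *)

theory Defs
  imports "HOL-Analysis.Analysis"
begin

text \<open>Matrices are indexed by a finite type of states; the entry A$a$b is row a, column b.
  For the rate matrix, R$a$b (a \<noteq> b) is the rate of jumps from b to a.\<close>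

primrec matpow :: "real^'n::finite^'n \<Rightarrow> nat \<Rightarrow> real^'n^'n" where
  "matpow A 0 = mat 1"
| "matpow A (Suc k) = A ** matpow A k"

definition mexp :: "real \<Rightarrow> real^'n::finite^'n \<Rightarrow> real^'n^'n" where
  "mexp t A = (\<chi> a b. (\<Sum>k. t ^ k / fact k * (matpow A k $ a $ b)))"

definition offrate :: "('n \<Rightarrow> 'n \<Rightarrow> real) \<Rightarrow> 'n \<Rightarrow> 'n \<Rightarrow> real \<Rightarrow> 'n \<Rightarrow> 'n \<Rightarrow> real" where
  "offrate r i j x a b = (if a = b then 0 else if (a, b) = (i, j) then x else r a b)"

definition rate_matrix :: "('n::finite \<Rightarrow> 'n \<Rightarrow> real) \<Rightarrow> 'n \<Rightarrow> 'n \<Rightarrow> real \<Rightarrow> real^'n^'n" where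
  "rate_matrix r i j x = (\<chi> a b. if a = b then - (\<Sum>c\<in>UNIV - {b}. offrate r i j x c b)
                                    else offrate r i j x a b)"

definition irreducible_rates :: "real^'n::finite^'n \<Rightarrow> bool" where
  "irreducible_rates R \<longleftrightarrow> (\<forall>a b. (b, a) \<in> {(u, v). u \<noteq> v \<and> R $ v $ u > 0}\<^sup>*)"

definition Phat :: "real^'n::finite^'n \<Rightarrow> complex \<Rightarrow> 'n \<Rightarrow> 'n \<Rightarrow> complex" where
  "Phat R \<omega> a b = integral {0..} (\<lambda>t::real. exp (- \<omega> * complex_of_real t) * complex_of_real (mexp t R $ a $ b))"

definition coef :: "('n::finite \<Rightarrow> real) \<Rightarrow> ('n \<Rightarrow> 'n \<Rightarrow> real) \<Rightarrow> ('n \<Rightarrow> 'n \<Rightarrow> real) \<Rightarrow> 'n \<Rightarrow> 'n \<Rightarrow> 'n \<Rightarrow> real" where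
  "coef A B r i j l = A l + (\<Sum>k\<in>{k. k \<noteq> l \<and> (k, l) \<noteq> (i, j)}. B k l * r k l)"

definition chi_hat ::
  "('n::finite \<Rightarrow> 'n \<Rightarrow> real) \<Rightarrow> 'n \<Rightarrow> 'n \<Rightarrow> ('n \<Rightarrow> real) \<Rightarrow> ('n \<Rightarrow> 'n \<Rightarrow> real)
    \<Rightarrow> ('n \<Rightarrow> real) \<Rightarrow> ('n \<Rightarrow> 'n \<Rightarrow> real) \<Rightarrow> complex \<Rightarrow> real \<Rightarrow> complex" where
  "chi_hat r i j A1 B1 A2 B2 \<omega> x =
     (\<Sum>l\<in>UNIV. complex_of_real (coef A1 B1 r i j l) * (Phat (rate_matrix r i j x) \<omega> l i - Phat (rate_matrix r i j x) \<omega> l j))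
   / (\<Sum>l\<in>UNIV. complex_of_real (coef A2 B2 r i j l) * (Phat (rate_matrix r i j x) \<omega> l i - Phat (rate_matrix r i j x) \<omega> l j))"

end

theory Submission
  imports Defs
begin

text \<open>Changing the rate r_ij from x to y perturbs the generator by the rank-one matrix
  (y - x) (e_i - e_j) e_j^T. Since e^{tR} is a stochastic matrix, integration by parts shows that
  the Laplace transform P_hat is the resolvent: R P_hat = P_hat R = \<omega> P_hat - I. Applying \<omega> - R_y
  to the column difference w_x = P_hat_x (e_i - e_j) therefore gives s (e_i - e_j) with the scalar
  s = 1 - (y - x) (w_x)_j, so w_x = s w_y. Numerator and denominator of chi_hat are linear in this
  column difference with coefficients that do not involve r_ij, so both scale by s and chi_hat does
  not depend on r_ij at all.\<close>

section \<open>Matrix exponential\<close>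

lemma matrix_add_rdistrib: "(A + B) ** C = A ** C + B ** C"
  by (vector matrix_matrix_mult_def sum.distrib[symmetric] field_simps)

lemma matrix_mult_sum_right: "A ** sum f S = (\<Sum>k\<in>S. A ** f k)"
  by (induction S rule: infinite_finite_induct) (simp_all add: matrix_add_ldistrib)

lemma matpow_Suc_right: "matpow A (Suc k) = matpow A k ** A"
proof (induction k)
  case 0
  show ?case by simp
next
  case (Suc k)
  then show ?case by (simp add: matrix_mul_assoc)
qed

definition entry_norm :: "real^'n::finite^'n \<Rightarrow> real" where
  "entry_norm A = (\<Sum>a\<in>UNIV. \<Sum>b\<in>UNIV. \<bar>A $ a $ b\<bar>)"

lemma abs_matpow_entry_le: "\<bar>matpow A k $ a $ b\<bar> \<le> entry_norm A ^ k"
proof (induction k arbitrary: a b)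
  case 0
  show ?case by (simp add: mat_def)
next
  case (Suc k)
  have row: "(\<Sum>c\<in>UNIV. \<bar>A $ a $ c\<bar>) \<le> entry_norm A"
    unfolding entry_norm_def
    by (rule member_le_sum[where f = "\<lambda>a. \<Sum>c\<in>UNIV. \<bar>A $ a $ c\<bar>"]) (auto intro: sum_nonneg)
  have "\<bar>matpow A (Suc k) $ a $ b\<bar> \<le> (\<Sum>c\<in>UNIV. \<bar>A $ a $ c\<bar> * \<bar>matpow A k $ c $ b\<bar>)"
    by (simp add: matrix_matrix_mult_def abs_mult[symmetric] sum_abs)
  also have "\<dots> \<le> (\<Sum>c\<in>UNIV. \<bar>A $ a $ c\<bar>) * entry_norm A ^ k"
    unfolding sum_distrib_right by (intro sum_mono mult_left_mono Suc.IH) auto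
  also have "\<dots> \<le> entry_norm A ^ Suc k"
    using row by (simp add: mult_right_mono entry_norm_def sum_nonneg)
  finally show ?case .
qed

lemma summable_abs_mexp_series: "summable (\<lambda>k. \<bar>t ^ k / fact k * matpow A k $ a $ b\<bar>)"
proof (rule summable_comparison_test')
  show "summable (\<lambda>k. inverse (fact k) * (\<bar>t\<bar> * entry_norm A) ^ k)"
    by (rule summable_exp)
  fix k :: nat
  have "\<bar>t ^ k / fact k * matpow A k $ a $ b\<bar> \<le> \<bar>t\<bar> ^ k / fact k * entry_norm A ^ k"
    unfolding abs_mult abs_divide power_abs abs_of_pos[OF fact_gt_zero]
    by (intro mult_left_mono abs_matpow_entry_le) auto
  then show "norm \<bar>t ^ k / fact k * matpow A k $ a $ b\<bar> \<le> inverse (fact k) * (\<bar>t\<bar> * entry_norm A) ^ k"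
    by (simp add: power_mult_distrib divide_inverse mult_ac)
qed

lemma summable_mexp_series: "summable (\<lambda>k. t ^ k / fact k * matpow A k $ a $ b)"
  using summable_abs_mexp_series by (rule summable_rabs_cancel)

lemma mexp_0 [simp]: "mexp 0 A = mat 1"
proof -
  have "(\<lambda>k. 0 ^ k / fact k * matpow A k $ a $ b) = (\<lambda>k. if k = 0 then mat 1 $ a $ b else 0)" for a b :: 'a
    by (auto simp: fun_eq_iff)
  then show ?thesis
    by (simp add: mexp_def vec_eq_iff sums_single[THEN sums_unique, symmetric])
qed

lemma mexp_series_Suc_left:
  "(\<Sum>k. t ^ k / fact k * matpow A (Suc k) $ a $ b) = (A ** mexp t A) $ a $ b"
proof -
  have "(\<Sum>k. t ^ k / fact k * matpow A (Suc k) $ a $ b)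
      = (\<Sum>k. \<Sum>c\<in>UNIV. A $ a $ c * (t ^ k / fact k * matpow A k $ c $ b))"
    by (simp add: matrix_matrix_mult_def sum_distrib_left mult_ac)
  also have "\<dots> = (\<Sum>c\<in>UNIV. \<Sum>k. A $ a $ c * (t ^ k / fact k * matpow A k $ c $ b))"
    by (rule suminf_sum) (intro summable_mult summable_mexp_series)
  also have "\<dots> = (\<Sum>c\<in>UNIV. A $ a $ c * mexp t A $ c $ b)"
    by (simp only: suminf_mult[OF summable_mexp_series] mexp_def vec_lambda_beta)
  finally show ?thesis by (simp add: matrix_matrix_mult_def)
qed

lemma mexp_series_Suc_right:
  "(\<Sum>k. t ^ k / fact k * matpow A (Suc k) $ a $ b) = (mexp t A ** A) $ a $ b"
proof -
  have "(\<Sum>k. t ^ k / fact k * matpow A (Suc k) $ a $ b)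
      = (\<Sum>k. \<Sum>c\<in>UNIV. A $ c $ b * (t ^ k / fact k * matpow A k $ a $ c))"
    by (simp only: matpow_Suc_right) (simp add: matrix_matrix_mult_def sum_distrib_left mult_ac)
  also have "\<dots> = (\<Sum>c\<in>UNIV. \<Sum>k. A $ c $ b * (t ^ k / fact k * matpow A k $ a $ c))"
    by (rule suminf_sum) (intro summable_mult summable_mexp_series)
  also have "\<dots> = (\<Sum>c\<in>UNIV. A $ c $ b * mexp t A $ a $ c)"
    by (simp only: suminf_mult[OF summable_mexp_series] mexp_def vec_lambda_beta)
  finally show ?thesis by (simp add: matrix_matrix_mult_def mult_ac)
qed

lemma matrix_mult_mexp_commute: "A ** mexp t A = mexp t A ** A"
  by (simp add: vec_eq_iff mexp_series_Suc_left[symmetric] mexp_series_Suc_right[symmetric])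

lemma has_real_derivative_mexp:
  "((\<lambda>t. mexp t A $ a $ b) has_real_derivative (A ** mexp t A) $ a $ b) (at t)"
proof -
  define c where "c k = matpow A k $ a $ b / fact k" for k
  have "((\<lambda>s. \<Sum>k. c k * s ^ k) has_real_derivative (\<Sum>k. diffs c k * t ^ k)) (at t)"
    by (rule termdiffs_strong_converges_everywhere)
      (use summable_mexp_series in \<open>simp add: c_def mult_ac\<close>)
  moreover have "(\<Sum>k. diffs c k * t ^ k) = (A ** mexp t A) $ a $ b"
    unfolding mexp_series_Suc_left[symmetric] diffs_def c_def
    by (simp add: field_simps del: of_nat_Suc)
  ultimately show ?thesis
    by (simp add: mexp_def c_def mult_ac)
qed

lemma continuous_on_mexp: "continuous_on S (\<lambda>t. mexp t A $ a $ b)"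
  by (rule continuous_at_imp_continuous_on) (auto intro: DERIV_isCont has_real_derivative_mexp)

lemma sum_scaleR_binomial_Suc:
  fixes f :: "nat \<Rightarrow> 'a::real_vector"
  shows "(\<Sum>k\<le>Suc n. real (Suc n choose k) *\<^sub>R f k)
       = (\<Sum>k\<le>n. real (n choose k) *\<^sub>R f k) + (\<Sum>k\<le>n. real (n choose k) *\<^sub>R f (Suc k))"
proof -
  have "(\<Sum>k\<le>n. real (n choose k) *\<^sub>R f k) = (\<Sum>k\<le>Suc n. real (n choose k) *\<^sub>R f k)"
    by simp
  also have "\<dots> = f 0 + (\<Sum>k\<le>n. real (n choose Suc k) *\<^sub>R f (Suc k))"
    by (subst sum.atMost_Suc_shift) simp
  finally show ?thesis
    by (subst sum.atMost_Suc_shift) (simp add: scaleR_add_left sum.distrib)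
qed

lemma matpow_add_scaleR_mat_1:
  "matpow (A + q *\<^sub>R mat 1) n = (\<Sum>k\<le>n. (real (n choose k) * q ^ k) *\<^sub>R matpow A (n - k))"
proof (induction n)
  case 0
  show ?case by simp
next
  case (Suc n)
  have "matpow (A + q *\<^sub>R mat 1) (Suc n) = A ** matpow (A + q *\<^sub>R mat 1) n + q *\<^sub>R matpow (A + q *\<^sub>R mat 1) n"
    by (simp add: matrix_add_rdistrib scalar_matrix_assoc[symmetric])
  also have "\<dots> = (\<Sum>k\<le>n. real (n choose k) *\<^sub>R (q ^ k *\<^sub>R matpow A (Suc n - k)))
                 + (\<Sum>k\<le>n. real (n choose k) *\<^sub>R (q ^ Suc k *\<^sub>R matpow A (Suc n - Suc k)))"
    by (simp add: Suc.IH matrix_mult_sum_right matrix_scalar_ac scalar_matrix_assoc[symmetric] scaleR_sum_right Suc_diff_le mult_ac)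
  also have "\<dots> = (\<Sum>k\<le>Suc n. real (Suc n choose k) *\<^sub>R (q ^ k *\<^sub>R matpow A (Suc n - k)))"
    by (rule sum_scaleR_binomial_Suc[symmetric])
  finally show ?case by (simp only: scaleR_scaleR)
qed

lemma mexp_add_scaleR_mat_1: "mexp t (A + q *\<^sub>R mat 1) = exp (q * t) *\<^sub>R mexp t A"
proof -
  have "exp (q * t) * mexp t A $ a $ b = mexp t (A + q *\<^sub>R mat 1) $ a $ b" for a b
  proof -
    define e where "e i = (q * t) ^ i / fact i" for i
    define m where "m j = t ^ j / fact j * matpow A j $ a $ b" for j
    have "summable (\<lambda>i. norm (e i))"
      using summable_exp[of "\<bar>q * t\<bar>"] by (simp add: e_def abs_mult power_abs divide_inverse mult_ac)
    moreover have "summable (\<lambda>j. norm (m j))"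
      using summable_abs_mexp_series by (simp add: m_def)
    moreover have "exp (q * t) = (\<Sum>i. e i)"
      using exp_converges[of "q * t"] by (simp add: e_def sums_iff divide_inverse mult_ac)
    ultimately have "exp (q * t) * mexp t A $ a $ b = (\<Sum>k. \<Sum>i\<le>k. e i * m (k - i))"
      by (simp add: Cauchy_product mexp_def m_def)
    also have "\<dots> = (\<Sum>k. t ^ k / fact k * matpow (A + q *\<^sub>R mat 1) k $ a $ b)"
    proof (rule suminf_cong)
      fix k
      have "e i * m (k - i) = t ^ k / fact k * (real (k choose i) * q ^ i * matpow A (k - i) $ a $ b)"
        if "i \<le> k" for i
      proof -
        have "t ^ k = t ^ i * t ^ (k - i)"
          using that by (simp add: power_add[symmetric])
        moreover have "real (k choose i) = fact k / (fact i * fact (k - i))"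
          using binomial_fact[OF that] by simp
        ultimately show ?thesis
          by (simp add: e_def m_def field_simps power_mult_distrib)
      qed
      then show "(\<Sum>i\<le>k. e i * m (k - i)) = t ^ k / fact k * matpow (A + q *\<^sub>R mat 1) k $ a $ b"
        by (simp add: matpow_add_scaleR_mat_1 sum_distrib_left)
    qed
    finally show ?thesis by (simp add: mexp_def)
  qed
  then show ?thesis by (simp add: vec_eq_iff)
qed

lemma matpow_nonneg: "(\<And>a b. 0 \<le> A $ a $ b) \<Longrightarrow> 0 \<le> matpow A k $ a $ b"
  by (induction k arbitrary: a b)
    (auto simp: mat_def matrix_matrix_mult_def intro!: sum_nonneg mult_nonneg_nonneg)

lemma mexp_nonneg: "(\<And>a b. 0 \<le> A $ a $ b) \<Longrightarrow> 0 \<le> t \<Longrightarrow> 0 \<le> mexp t A $ a $ b"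
  unfolding mexp_def vec_lambda_beta
  by (intro suminf_nonneg summable_mexp_series mult_nonneg_nonneg matpow_nonneg) auto

section \<open>Generator matrices\<close>

definition generator_matrix :: "real^'n::finite^'n \<Rightarrow> bool" where
  "generator_matrix R \<longleftrightarrow> (\<forall>a b. a \<noteq> b \<longrightarrow> 0 \<le> R $ a $ b) \<and> (\<forall>b. (\<Sum>a\<in>UNIV. R $ a $ b) = 0)"

lemma column_sum_mexp:
  assumes "generator_matrix R"
  shows "(\<Sum>a\<in>UNIV. mexp t R $ a $ b) = 1"
proof -
  have "(\<Sum>a\<in>UNIV. matpow R (Suc k) $ a $ b) = 0" for k
  proof -
    have "(\<Sum>a\<in>UNIV. matpow R (Suc k) $ a $ b) = (\<Sum>c\<in>UNIV. (\<Sum>a\<in>UNIV. R $ a $ c) * matpow R k $ c $ b)"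
      by (simp add: matrix_matrix_mult_def sum_distrib_right) (rule sum.swap)
    then show ?thesis
      using assms by (simp add: generator_matrix_def)
  qed
  then have "(\<Sum>a\<in>UNIV. t ^ k / fact k * matpow R k $ a $ b) = (if k = 0 then 1 else 0)" for k
    by (cases k) (simp_all only: sum_distrib_left[symmetric], simp_all add: mat_def)
  then have "(\<Sum>k. \<Sum>a\<in>UNIV. t ^ k / fact k * matpow R k $ a $ b) = 1"
    by (simp add: sums_single[THEN sums_unique, symmetric])
  moreover have "(\<Sum>a\<in>UNIV. mexp t R $ a $ b) = (\<Sum>k. \<Sum>a\<in>UNIV. t ^ k / fact k * matpow R k $ a $ b)"
    unfolding mexp_def vec_lambda_beta by (rule suminf_sum[symmetric]) (rule summable_mexp_series)
  ultimately show ?thesis by simp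
qed

text \<open>R + q I is entrywise nonnegative, hence so is e^{tR} = e^{-qt} e^{t(R + q I)}; its columns
  sum to 1.\<close>
lemma mexp_generator_bounds:
  assumes R: "generator_matrix R" and t: "0 \<le> t"
  shows "0 \<le> mexp t R $ a $ b" and "mexp t R $ a $ b \<le> 1"
proof -
  define q where "q = (\<Sum>c\<in>UNIV. \<bar>R $ c $ c\<bar>)"
  have "0 \<le> (R + q *\<^sub>R mat 1) $ a $ b" for a b
  proof (cases "a = b")
    case True
    have "\<bar>R $ a $ a\<bar> \<le> q"
      unfolding q_def by (rule member_le_sum) auto
    then show ?thesis using True by (simp add: mat_def)
  next
    case False
    then show ?thesis using R by (simp add: mat_def generator_matrix_def)
  qed
  then have "0 \<le> mexp t (R + q *\<^sub>R mat 1) $ a $ b" for a b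
    using mexp_nonneg t by blast
  then have "0 \<le> exp (q * t) * mexp t R $ a $ b" for a b
    by (simp add: mexp_add_scaleR_mat_1)
  then show nonneg: "0 \<le> mexp t R $ a $ b" for a b
    by (simp add: zero_le_mult_iff)
  have "mexp t R $ a $ b \<le> (\<Sum>c\<in>UNIV. mexp t R $ c $ b)"
    by (rule member_le_sum) (auto intro: nonneg)
  then show "mexp t R $ a $ b \<le> 1"
    using column_sum_mexp[OF R] by simp
qed

lemma generator_rate_matrix:
  assumes "\<And>a b. a \<noteq> b \<Longrightarrow> 0 \<le> r a b" and "0 \<le> y"
  shows "generator_matrix (rate_matrix r i j y)"
  unfolding generator_matrix_def
proof safe
  fix a b :: 'a
  assume "a \<noteq> b"
  then show "0 \<le> rate_matrix r i j y $ a $ b"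
    using assms by (auto simp: rate_matrix_def offrate_def)
next
  fix b :: 'a
  have "(\<Sum>a\<in>UNIV. rate_matrix r i j y $ a $ b)
      = rate_matrix r i j y $ b $ b + (\<Sum>a\<in>UNIV - {b}. offrate r i j y a b)"
    by (simp add: sum.remove[of UNIV b] rate_matrix_def)
  then show "(\<Sum>a\<in>UNIV. rate_matrix r i j y $ a $ b) = 0"
    by (simp add: rate_matrix_def)
qed

lemma rate_matrix_change:
  assumes "i \<noteq> j"
  shows "rate_matrix r i j y $ a $ c = rate_matrix r i j x $ a $ c
     + (if c = j then (y - x) * ((if a = i then 1 else 0) - (if a = j then 1 else 0)) else 0)"
proof (cases "a = c")
  case True
  have "(\<Sum>d\<in>UNIV - {c}. offrate r i j y d c)
      = (\<Sum>d\<in>UNIV - {c}. offrate r i j x d c + (if d = i \<and> c = j then y - x else 0))"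
    by (rule sum.cong) (auto simp: offrate_def)
  also have "\<dots> = (\<Sum>d\<in>UNIV - {c}. offrate r i j x d c) + (if c = j then y - x else 0)"
    using assms by (simp add: sum.distrib sum.delta)
  finally show ?thesis
    using True assms by (simp add: rate_matrix_def)
next
  case False
  then show ?thesis
    using assms by (auto simp: rate_matrix_def offrate_def)
qed

section \<open>Laplace transform\<close>

lemma improper_integral_exp_dominated:
  fixes g :: "real \<Rightarrow> 'a::euclidean_space"
  assumes cont: "continuous_on {0..} g" and "0 < \<alpha>"
    and bound: "\<And>t. 0 \<le> t \<Longrightarrow> norm (g t) \<le> C * exp (- \<alpha> * t)"
  shows "g integrable_on {0..}"
    and "(\<lambda>n. integral {0..real n} g) \<longlonglongrightarrow> integral {0..} g"
proof -
  define g\<^sub>n where "g\<^sub>n n t = (if t \<in> {..real n} then g t else 0)" for n t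
  have "{..real n} \<inter> {0..} = {0..real n}" for n
    by auto
  moreover have "g integrable_on {0..real n}" for n
    by (rule integrable_continuous_interval) (rule continuous_on_subset[OF cont], auto)
  ultimately have g\<^sub>n_integrable: "g\<^sub>n n integrable_on {0..}" and g\<^sub>n_integral: "integral {0..} (g\<^sub>n n) = integral {0..real n} g" for n
    unfolding g\<^sub>n_def integrable_restrict_Int integral_restrict_Int by simp_all
  have dominant: "(\<lambda>t. C * exp (- \<alpha> * t)) integrable_on {0..}"
    using integrable_cmul[OF integrable_on_exp_minus_to_infinity[OF \<open>0 < \<alpha>\<close>, of 0], of C] by simp
  have dominated: "norm (g\<^sub>n n t) \<le> C * exp (- \<alpha> * t)" if "t \<in> {0..}" for n t
    using that bound[of t] order_trans[OF norm_ge_zero bound[of t]] by (auto simp: g\<^sub>n_def)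
  have pointwise: "(\<lambda>n. g\<^sub>n n t) \<longlonglongrightarrow> g t" for t
  proof (rule tendsto_eventually)
    obtain N where "t \<le> real N"
      using real_arch_simple by blast
    then show "\<forall>\<^sub>F n in sequentially. g\<^sub>n n t = g t"
      unfolding eventually_sequentially g\<^sub>n_def by (metis atMost_iff order.trans of_nat_mono)
  qed
  show "g integrable_on {0..}" and "(\<lambda>n. integral {0..real n} g) \<longlonglongrightarrow> integral {0..} g"
    using dominated_convergence[of g\<^sub>n, OF g\<^sub>n_integrable dominant dominated pointwise]
    by (simp_all add: g\<^sub>n_integral)
qed

definition laplace :: "complex \<Rightarrow> (real \<Rightarrow> complex) \<Rightarrow> complex" where
  "laplace \<omega> f = integral {0..} (\<lambda>t. exp (- \<omega> * t) * f t)"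

lemma Phat_eq_laplace: "Phat R \<omega> a b = laplace \<omega> (\<lambda>t. mexp t R $ a $ b)"
  by (simp add: Phat_def laplace_def)

lemma laplace_integrand_bound:
  fixes f :: "real \<Rightarrow> complex"
  assumes "\<And>t. 0 \<le> t \<Longrightarrow> norm (f t) \<le> C" and "0 \<le> t"
  shows "norm (exp (- \<omega> * t) * f t) \<le> C * exp (- Re \<omega> * t)"
  using assms by (simp add: norm_mult mult.commute mult_right_mono)

lemma laplace_integrable:
  fixes f :: "real \<Rightarrow> complex"
  assumes "continuous_on {0..} f" "\<And>t. 0 \<le> t \<Longrightarrow> norm (f t) \<le> C" "0 < Re \<omega>"
  shows "(\<lambda>t. exp (- \<omega> * t) * f t) integrable_on {0..}"
  by (rule improper_integral_exp_dominated(1)[OF _ \<open>0 < Re \<omega>\<close> laplace_integrand_bound])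
    (use assms in \<open>auto intro!: continuous_intros\<close>)

lemma laplace_sum:
  fixes f :: "'a \<Rightarrow> real \<Rightarrow> complex"
  assumes "finite S" and "\<And>c. c \<in> S \<Longrightarrow> (\<lambda>t. exp (- \<omega> * t) * f c t) integrable_on {0..}"
  shows "laplace \<omega> (\<lambda>t. \<Sum>c\<in>S. k c * f c t) = (\<Sum>c\<in>S. k c * laplace \<omega> (f c))"
  unfolding laplace_def sum_distrib_left
  using assms by (subst integral_sum) (auto intro: integrable_on_mult_right simp: mult.left_commute)

lemma laplace_derivative:
  fixes f f' :: "real \<Rightarrow> complex"
  assumes deriv: "\<And>t. 0 \<le> t \<Longrightarrow> (f has_vector_derivative f' t) (at t within {0..})"
    and cont': "continuous_on {0..} f'"
    and bound: "\<And>t. 0 \<le> t \<Longrightarrow> norm (f t) \<le> C"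
    and bound': "\<And>t. 0 \<le> t \<Longrightarrow> norm (f' t) \<le> C'"
    and \<omega>: "0 < Re \<omega>"
  shows "laplace \<omega> f' = \<omega> * laplace \<omega> f - f 0"
proof -
  define e where "e t = exp (- \<omega> * complex_of_real t)" for t
  have cont_e: "continuous_on S e" for S
    unfolding e_def by (intro continuous_intros)
  have cont: "continuous_on {0..} f"
    using deriv by (auto simp: continuous_on_eq_continuous_within intro: has_vector_derivative_continuous)
  have partial_integrals:
    "(\<lambda>n. integral {0..real n} (\<lambda>t. e t * h t)) \<longlonglongrightarrow> laplace \<omega> h"
    if "continuous_on {0..} h" "\<And>t. 0 \<le> t \<Longrightarrow> norm (h t) \<le> D" for h D
    unfolding laplace_def e_def
    by (rule improper_integral_exp_dominated(2)[OF _ \<omega> laplace_integrand_bound])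
      (use that in \<open>auto intro!: continuous_intros\<close>)
  have integral_by_parts:
    "integral {0..real n} (\<lambda>t. e t * f' t) - \<omega> * integral {0..real n} (\<lambda>t. e t * f t)
      = e (real n) * f (real n) - f 0" for n
  proof -
    have "((\<lambda>t. e t * f t) has_vector_derivative e t * f' t - \<omega> * (e t * f t)) (at t within {0..real n})"
      if "t \<in> {0..real n}" for t
    proof -
      have "(e has_vector_derivative - \<omega> * e t) (at t within {0..real n})"
        unfolding e_def
        by (rule has_vector_derivative_real_field) (auto intro!: derivative_eq_intros)
      moreover have "(f has_vector_derivative f' t) (at t within {0..real n})"
        using deriv[of t] that by (auto intro: has_vector_derivative_within_subset)
      ultimately show ?thesis
        using has_vector_derivative_mult by (fastforce simp: algebra_simps)
    qed
    then have "((\<lambda>t. e t * f' t - \<omega> * (e t * f t)) has_integral e (real n) * f (real n) - e 0 * f 0) {0..real n}"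
      by (intro fundamental_theorem_of_calculus) auto
    moreover have "(\<lambda>t. e t * f' t) integrable_on {0..real n}" "(\<lambda>t. e t * f t) integrable_on {0..real n}"
      by (auto intro!: integrable_continuous_interval continuous_intros cont_e
          continuous_on_subset[OF cont'] continuous_on_subset[OF cont])
    then have "integral {0..real n} (\<lambda>t. e t * f' t - \<omega> * (e t * f t))
        = integral {0..real n} (\<lambda>t. e t * f' t) - \<omega> * integral {0..real n} (\<lambda>t. e t * f t)"
      by (simp add: integral_diff integrable_on_mult_right)
    ultimately show ?thesis
      by (simp add: integral_unique e_def)
  qed
  have "(\<lambda>n. e (real n) * f (real n)) \<longlonglongrightarrow> 0"
  proof (rule Lim_null_comparison)
    have "norm (e (real n) * f (real n)) \<le> C * exp (- Re \<omega> * real n)" for n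
      unfolding e_def by (rule laplace_integrand_bound[OF bound]) auto
    moreover have "exp (- Re \<omega> * real n) = exp (- Re \<omega>) ^ n" for n
      by (simp add: exp_of_nat_mult[symmetric] mult.commute)
    ultimately show "\<forall>\<^sub>F n in sequentially. norm (e (real n) * f (real n)) \<le> C * exp (- Re \<omega>) ^ n"
      by simp
    show "(\<lambda>n. C * exp (- Re \<omega>) ^ n) \<longlonglongrightarrow> 0"
      using \<omega> by (intro tendsto_mult_right_zero LIMSEQ_realpow_zero) auto
  qed
  then have "(\<lambda>n. integral {0..real n} (\<lambda>t. e t * f' t) - \<omega> * integral {0..real n} (\<lambda>t. e t * f t)) \<longlonglongrightarrow> - f 0"
    unfolding integral_by_parts by (auto intro: tendsto_eq_intros)
  moreover have "(\<lambda>n. integral {0..real n} (\<lambda>t. e t * f' t) - \<omega> * integral {0..real n} (\<lambda>t. e t * f t))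
      \<longlonglongrightarrow> laplace \<omega> f' - \<omega> * laplace \<omega> f"
    by (intro tendsto_intros partial_integrals[OF cont bound] partial_integrals[OF cont' bound'])
  ultimately have "laplace \<omega> f' - \<omega> * laplace \<omega> f = - f 0"
    by (rule LIMSEQ_unique[rotated])
  then show ?thesis
    by (simp add: algebra_simps)
qed

lemma laplace_integrable_mexp:
  assumes R: "generator_matrix R" and \<omega>: "0 < Re \<omega>"
  shows "(\<lambda>t. exp (- \<omega> * t) * complex_of_real (mexp t R $ a $ b)) integrable_on {0..}"
proof (rule laplace_integrable[where C = 1, OF _ _ \<omega>])
  show "continuous_on {0..} (\<lambda>t. complex_of_real (mexp t R $ a $ b))"
    by (intro continuous_intros continuous_on_mexp)
  show "norm (complex_of_real (mexp t R $ a $ b)) \<le> 1" if "0 \<le> t" for t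
    using mexp_generator_bounds[OF R that] by simp
qed

lemma laplace_derivative_mexp:
  assumes R: "generator_matrix R" and \<omega>: "0 < Re \<omega>"
  shows "laplace \<omega> (\<lambda>t. (R ** mexp t R) $ a $ b) = \<omega> * Phat R \<omega> a b - (if a = b then 1 else 0)"
proof -
  have "laplace \<omega> (\<lambda>t. (R ** mexp t R) $ a $ b) = \<omega> * laplace \<omega> (\<lambda>t. mexp t R $ a $ b) - mexp 0 R $ a $ b"
  proof (rule laplace_derivative[where C = 1 and C' = "\<Sum>c\<in>UNIV. \<bar>R $ a $ c\<bar>"])
    show "((\<lambda>t. complex_of_real (mexp t R $ a $ b)) has_vector_derivative (R ** mexp t R) $ a $ b) (at t within {0..})" for t
      by (rule has_vector_derivative_of_real) (rule DERIV_subset[OF has_real_derivative_mexp], simp)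
    show "continuous_on {0..} (\<lambda>t. complex_of_real ((R ** mexp t R) $ a $ b))"
      unfolding matrix_matrix_mult_def by (auto intro!: continuous_intros continuous_on_mexp)
    show "norm (complex_of_real (mexp t R $ a $ b)) \<le> 1" if "0 \<le> t" for t
      using mexp_generator_bounds[OF R that] by auto
    show "norm (complex_of_real ((R ** mexp t R) $ a $ b)) \<le> (\<Sum>c\<in>UNIV. \<bar>R $ a $ c\<bar>)" if "0 \<le> t" for t
    proof -
      have "\<bar>(R ** mexp t R) $ a $ b\<bar> \<le> (\<Sum>c\<in>UNIV. \<bar>R $ a $ c\<bar> * \<bar>mexp t R $ c $ b\<bar>)"
        by (simp add: matrix_matrix_mult_def abs_mult[symmetric] sum_abs)
      also have "\<dots> \<le> (\<Sum>c\<in>UNIV. \<bar>R $ a $ c\<bar>)"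
        using mexp_generator_bounds[OF R that] by (intro sum_mono mult_right_le_one_le) auto
      finally show ?thesis by simp
    qed
  qed (use \<omega> in auto)
  then show ?thesis
    by (simp add: Phat_eq_laplace mat_def)
qed

lemma resolvent_identity_left:
  assumes R: "generator_matrix R" and \<omega>: "0 < Re \<omega>"
  shows "(\<Sum>c\<in>UNIV. complex_of_real (R $ a $ c) * Phat R \<omega> c b) = \<omega> * Phat R \<omega> a b - (if a = b then 1 else 0)"
proof -
  have "(\<Sum>c\<in>UNIV. complex_of_real (R $ a $ c) * Phat R \<omega> c b)
      = laplace \<omega> (\<lambda>t. \<Sum>c\<in>UNIV. complex_of_real (R $ a $ c) * complex_of_real (mexp t R $ c $ b))"
    unfolding Phat_eq_laplace by (rule laplace_sum[symmetric]) (simp, rule laplace_integrable_mexp[OF R \<omega>])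
  also have "\<dots> = laplace \<omega> (\<lambda>t. (R ** mexp t R) $ a $ b)"
    by (simp add: matrix_matrix_mult_def)
  finally show ?thesis
    using laplace_derivative_mexp[OF R \<omega>] by simp
qed

lemma resolvent_identity_right:
  assumes R: "generator_matrix R" and \<omega>: "0 < Re \<omega>"
  shows "(\<Sum>c\<in>UNIV. Phat R \<omega> a c * complex_of_real (R $ c $ b)) = \<omega> * Phat R \<omega> a b - (if a = b then 1 else 0)"
proof -
  have "(\<Sum>c\<in>UNIV. Phat R \<omega> a c * complex_of_real (R $ c $ b))
      = laplace \<omega> (\<lambda>t. \<Sum>c\<in>UNIV. complex_of_real (R $ c $ b) * complex_of_real (mexp t R $ a $ c))"
    unfolding Phat_eq_laplace mult.commute[of "laplace _ _"]
    by (rule laplace_sum[symmetric]) (simp, rule laplace_integrable_mexp[OF R \<omega>])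
  also have "\<dots> = laplace \<omega> (\<lambda>t. (R ** mexp t R) $ a $ b)"
    unfolding matrix_mult_mexp_commute by (simp add: matrix_matrix_mult_def mult.commute)
  finally show ?thesis
    using laplace_derivative_mexp[OF R \<omega>] by simp
qed

lemma resolvent_equation_solution:
  fixes S :: "real^'n::finite^'n" and u v :: "'n \<Rightarrow> complex"
  assumes S: "generator_matrix S" and \<omega>: "0 < Re \<omega>"
    and v: "\<And>a. \<omega> * v a - (\<Sum>c\<in>UNIV. complex_of_real (S $ a $ c) * v c) = u a"
  shows "v a = (\<Sum>c\<in>UNIV. Phat S \<omega> a c * u c)"
proof -
  let ?P = "Phat S \<omega>"
  have "(\<Sum>c\<in>UNIV. ?P a c * u c)
      = (\<Sum>c\<in>UNIV. \<omega> * (?P a c * v c)) - (\<Sum>c\<in>UNIV. \<Sum>d\<in>UNIV. ?P a c * complex_of_real (S $ c $ d) * v d)"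
    unfolding v[symmetric] right_diff_distrib sum_subtractf sum_distrib_left
    by (simp only: mult_ac)
  also have "(\<Sum>c\<in>UNIV. \<Sum>d\<in>UNIV. ?P a c * complex_of_real (S $ c $ d) * v d)
      = (\<Sum>d\<in>UNIV. (\<omega> * ?P a d - (if a = d then 1 else 0)) * v d)"
    unfolding resolvent_identity_right[OF S \<omega>, symmetric] sum_distrib_right
    by (rule sum.swap)
  also have "\<dots> = (\<Sum>d\<in>UNIV. \<omega> * (?P a d * v d)) - (\<Sum>d\<in>UNIV. (if a = d then 1 else 0) * v d)"
    by (simp only: left_diff_distrib sum_subtractf mult.assoc)
  also have "(\<Sum>d\<in>UNIV. (if a = d then 1 else 0) * v d) = v a"
    by (simp add: if_distrib [of "\<lambda>x. x * _"] cong: if_cong)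
  finally show ?thesis
    by simp
qed

section \<open>Changing a single rate\<close>

lemma Phat_column_difference_rate_change:
  fixes r :: "'n::finite \<Rightarrow> 'n \<Rightarrow> real" and i j :: 'n and \<omega> :: complex
  defines "w z a \<equiv> Phat (rate_matrix r i j z) \<omega> a i - Phat (rate_matrix r i j z) \<omega> a j"
  assumes nonneg: "\<And>a b. a \<noteq> b \<Longrightarrow> 0 \<le> r a b" and ij: "i \<noteq> j" and \<omega>: "0 < Re \<omega>"
    and "0 \<le> x" "0 \<le> y"
  shows "w x a = (1 - complex_of_real (y - x) * w x j) * w y a"
proof -
  define s where "s = 1 - complex_of_real (y - x) * w x j"
  define u :: "'n \<Rightarrow> complex" where "u a = (if a = i then 1 else 0) - (if a = j then 1 else 0)" for a
  have gen: "generator_matrix (rate_matrix r i j z)" if "0 \<le> z" for z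
    using generator_rate_matrix[OF nonneg that] .
  have "complex_of_real (rate_matrix r i j y $ a $ c)
      = complex_of_real (rate_matrix r i j x $ a $ c) + (if c = j then complex_of_real (y - x) * u a else 0)" for a c
    unfolding rate_matrix_change[OF ij, of r y a c x] u_def by simp
  then have "(\<Sum>c\<in>UNIV. complex_of_real (rate_matrix r i j y $ a $ c) * w x c)
      = (\<Sum>c\<in>UNIV. complex_of_real (rate_matrix r i j x $ a $ c) * w x c) + complex_of_real (y - x) * u a * w x j" for a
    by (simp add: distrib_right sum.distrib if_distrib [of "\<lambda>z. z * _"] cong: if_cong)
  moreover have "(\<Sum>c\<in>UNIV. complex_of_real (rate_matrix r i j x $ a $ c) * w x c) = \<omega> * w x a - u a" for a
    unfolding w_def u_def right_diff_distrib sum_subtractf resolvent_identity_left[OF gen[OF \<open>0 \<le> x\<close>] \<omega>]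
    by simp
  ultimately have "\<omega> * w x a - (\<Sum>c\<in>UNIV. complex_of_real (rate_matrix r i j y $ a $ c) * w x c) = s * u a" for a
    by (simp add: s_def algebra_simps)
  then have "w x a = (\<Sum>c\<in>UNIV. Phat (rate_matrix r i j y) \<omega> a c * (s * u c))"
    by (rule resolvent_equation_solution[OF gen[OF \<open>0 \<le> y\<close>] \<omega>])
  also have "\<dots> = s * w y a"
    by (simp add: u_def w_def right_diff_distrib sum_subtractf sum_distrib_left if_distrib [of "\<lambda>z. _ * z"] cong: if_cong)
  finally show ?thesis
    unfolding s_def .
qed

lemma chi_hat_rate_independent:
  assumes nonneg: "\<And>a b. a \<noteq> b \<Longrightarrow> 0 \<le> r a b" and ij: "i \<noteq> j" and \<omega>: "0 < Re \<omega>"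
    and "0 \<le> x" "0 \<le> y"
    and den: "(\<Sum>l\<in>UNIV. complex_of_real (coef A2 B2 r i j l) *
               (Phat (rate_matrix r i j x) \<omega> l i - Phat (rate_matrix r i j x) \<omega> l j)) \<noteq> 0"
  shows "chi_hat r i j A1 B1 A2 B2 \<omega> y = chi_hat r i j A1 B1 A2 B2 \<omega> x"
proof -
  define w where "w z l = Phat (rate_matrix r i j z) \<omega> l i - Phat (rate_matrix r i j z) \<omega> l j" for z l
  define s where "s = 1 - complex_of_real (y - x) * w x j"
  have "w x l = s * w y l" for l
    unfolding w_def s_def by (rule Phat_column_difference_rate_change[OF nonneg ij \<omega> \<open>0 \<le> x\<close> \<open>0 \<le> y\<close>])
  then have scale: "(\<Sum>l\<in>UNIV. complex_of_real (coef A B r i j l) * w x l)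
      = s * (\<Sum>l\<in>UNIV. complex_of_real (coef A B r i j l) * w y l)" for A B
    by (simp add: sum_distrib_left mult_ac)
  with den have "s \<noteq> 0" "(\<Sum>l\<in>UNIV. complex_of_real (coef A2 B2 r i j l) * w y l) \<noteq> 0"
    by (auto simp: w_def)
  then show ?thesis
    by (simp add: chi_hat_def w_def[symmetric] scale)
qed

theorem theorem3:
  fixes r :: "'n::finite \<Rightarrow> 'n \<Rightarrow> real"
    and i j :: 'n
    and A1 A2 :: "'n \<Rightarrow> real" and B1 B2 :: "'n \<Rightarrow> 'n \<Rightarrow> real"
    and \<omega> :: complex and x :: real
  assumes nonneg: "\<And>a b. a \<noteq> b \<Longrightarrow> r a b \<ge> 0"
    and ij: "i \<noteq> j"
    and irred: "\<And>y. y > 0 \<Longrightarrow> irreducible_rates (rate_matrix r i j y)"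
    and \<omega>: "Re \<omega> > 0"
    and x: "x > 0"
    and den: "(\<Sum>l\<in>UNIV. complex_of_real (coef A2 B2 r i j l) *
               (Phat (rate_matrix r i j x) \<omega> l i - Phat (rate_matrix r i j x) \<omega> l j)) \<noteq> 0"
  shows "((\<lambda>y. chi_hat r i j A1 B1 A2 B2 \<omega> y) has_vector_derivative 0) (at x)"
proof (rule has_vector_derivative_transform_within_open[OF has_vector_derivative_const open_greaterThan])
  show "x \<in> {0<..}"
    using x by simp
  show "chi_hat r i j A1 B1 A2 B2 \<omega> x = chi_hat r i j A1 B1 A2 B2 \<omega> y" if "y \<in> {0<..}" for y
    using that x by (intro chi_hat_rate_independent[OF nonneg ij \<omega> _ _ den, symmetric]) auto
qed

end
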